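(* Let $V:[0,\infty)\to\mathbb{R}$ be càdlàg with finite variation on compact intervals. Let $t>0$, and let $x$ be a simple level for $V$ with $x\neq V(0)$ and $x\neq V(t)$. Then the sets $(0,t]\cap\mathcal{I}(x)$ and $(0,t]\cap\mathcal{D}(x)$ are finite. The sum below has only finitely many nonzero terms, and $$\mathbf{1}_{[x,\infty)}(V(t))=\mathbf{1}_{[x,\infty)}(V(0))+\ell^x(t)+\sum_{0<s\le t}\Big(\mathbf{1}_{[x,\infty)}(V(s))-\mathbf{1}_{[x,\infty)}(V(s-))\Big).$$
   Context: $V(s-)$ is the left limit and $\Delta V(s)=V(s)-V(s-)$. A level $x\in\mathbb{R}$ is simple for $V$ if two conditions hold. First, the set $\{t>0: V(t-)<x<V(t)\text{ or }V(t)<x<V(t-)\text{ or }V(t)=x\}$ is discrete. Second, there is no $t>0$ with $\Delta V(t)\ne0$ and $x\in\{V(t),V(t-)\}$. We write $t\in\mathcal{I}(x)$ (i.e. $V$ increases through level $x$ at time $t$) if two conditions hold. First, $V(t)=x$ and $V$ is continuous at $t$. Second, there is $\delta>0$ such that for all $s\ge0$ with $0<|s-t|<\delta$, $V(s)-V(t)$ has the same strict sign as $s-t$. We write $t\in\mathcal{D}(x)$ (i.e. $V$ decreases through level $x$ at time $t$) if $-V$ increases through $-x$ at time $t$. Finally $\ell^x(t)=\mathrm{Card}((0,t]\cap\mathcal{I}(x))-\mathrm{Card}((0,t]\cap\mathcal{D}(x))$. *)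

theory Defs
  imports "HOL-Analysis.Analysis"
begin

text \<open>Paths are functions V :: real => real; only their values on [0,oo) are relevant.\<close>

definition left_lim :: "(real \<Rightarrow> real) \<Rightarrow> real \<Rightarrow> real" where
  "left_lim V t = Lim (at_left t) V"

definition cadlag_on_nonneg :: "(real \<Rightarrow> real) \<Rightarrow> bool" where
  "cadlag_on_nonneg V \<longleftrightarrow>
     (\<forall>t\<ge>0. (V \<longlongrightarrow> V t) (at_right t)) \<and>
     (\<forall>t>0. \<exists>L. (V \<longlongrightarrow> L) (at_left t))"

definition bounded_variation_on :: "(real \<Rightarrow> real) \<Rightarrow> real \<Rightarrow> real \<Rightarrow> bool" where
  "bounded_variation_on V a b \<longleftrightarrow>
     (\<exists>B. \<forall>(n::nat) (p::nat \<Rightarrow> real).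
        (\<forall>i\<le>n. a \<le> p i \<and> p i \<le> b) \<and> (\<forall>i<n. p i \<le> p (Suc i)) \<longrightarrow>
        (\<Sum>i<n. \<bar>V (p (Suc i)) - V (p i)\<bar>) \<le> B)"

definition finite_variation_compacts :: "(real \<Rightarrow> real) \<Rightarrow> bool" where
  "finite_variation_compacts V \<longleftrightarrow> (\<forall>T\<ge>0. bounded_variation_on V 0 T)"

definition simple_level :: "(real \<Rightarrow> real) \<Rightarrow> real \<Rightarrow> bool" where
  "simple_level V x \<longleftrightarrow>
     discrete {t. t > 0 \<and> ((left_lim V t < x \<and> x < V t) \<or> (V t < x \<and> x < left_lim V t) \<or> V t = x)} \<and>
     \<not> (\<exists>t>0. V t - left_lim V t \<noteq> 0 \<and> (x = V t \<or> x = left_lim V t))"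

definition increases_through :: "(real \<Rightarrow> real) \<Rightarrow> real \<Rightarrow> real \<Rightarrow> bool" where
  "increases_through V x t \<longleftrightarrow>
     V t = x \<and> continuous (at t within {0..}) V \<and>
     (\<exists>\<delta>>0. \<forall>s\<ge>0. 0 < \<bar>s - t\<bar> \<and> \<bar>s - t\<bar> < \<delta> \<longrightarrow> sgn (V s - V t) = sgn (s - t))"

definition decreases_through :: "(real \<Rightarrow> real) \<Rightarrow> real \<Rightarrow> real \<Rightarrow> bool" where
  "decreases_through V x t \<longleftrightarrow> increases_through (\<lambda>s. - V s) (- x) t"

definition incr_set :: "(real \<Rightarrow> real) \<Rightarrow> real \<Rightarrow> real set" where
  "incr_set V x = {t. increases_through V x t}"

definition decr_set :: "(real \<Rightarrow> real) \<Rightarrow> real \<Rightarrow> real set" where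
  "decr_set V x = {t. decreases_through V x t}"

definition level_count :: "(real \<Rightarrow> real) \<Rightarrow> real \<Rightarrow> real \<Rightarrow> int" where
  "level_count V x t = int (card ({0<..t} \<inter> incr_set V x)) - int (card ({0<..t} \<inter> decr_set V x))"

end

theory Submission
  imports Defs
begin

text \<open>
  Call \<open>s > 0\<close> a crossing time if \<open>V\<close> equals \<open>x\<close> at \<open>s\<close> or jumps across \<open>x\<close> there.
  Since \<open>x\<close> is simple, \<open>V\<close> never jumps onto or off the level, so on an interval free of
  crossing times a first-passage argument with right-continuity shows that the sign of \<open>V - x\<close>
  cannot change. Near any other time both \<open>V\<close> and its left limits stay away from \<open>x\<close>, so,
  together with discreteness, the crossing times do not accumulate in \<open>[0, t]\<close> and are finitely
  many. Hence \<open>1[x,\<infinity>)(V)\<close> changes only at these times, each by its jump there if \<open>V\<close> jumps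
  across \<open>x\<close>, and by \<open>\<plusminus>1\<close> or \<open>0\<close> according to the signs of \<open>V - x\<close> on either side if \<open>V\<close> meets
  \<open>x\<close> continuously.
\<close>

lemma cadlag_stays_below:
  fixes W LW :: "real \<Rightarrow> real"
  assumes right_cont: "\<And>s. a \<le> s \<Longrightarrow> s \<le> b \<Longrightarrow> (W \<longlongrightarrow> W s) (at_right s)"
    and left_limits: "\<And>s. a < s \<Longrightarrow> s \<le> b \<Longrightarrow> (W \<longlongrightarrow> LW s) (at_left s)"
    and no_upcrossing: "\<And>s. a < s \<Longrightarrow> s \<le> b \<Longrightarrow> LW s \<le> x \<Longrightarrow> W s < x"
    and "W a < x" "a \<le> u" "u \<le> b"
  shows "W u < x"
proof (rule ccontr)
  assume "\<not> W u < x"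
  \<comment> \<open>At the first passage time \<open>c\<close> above \<open>x\<close>, right-continuity gives \<open>x \<le> W c\<close> while the
      left limit is \<open>\<le> x\<close>, which the hypothesis excludes.\<close>
  define C where "C = {s. a \<le> s \<and> s \<le> b \<and> x \<le> W s}"
  define c where "c = Inf C"
  have "u \<in> C" using \<open>\<not> W u < x\<close> assms by (auto simp: C_def)
  have bdd: "bdd_below C" by (auto simp: C_def bdd_below_def)
  have "a \<le> c" "c \<le> u"
    using \<open>u \<in> C\<close> bdd unfolding c_def by (auto intro!: cInf_greatest cInf_lower simp: C_def)
  have below: "W s < x" if "a \<le> s" "s < c" for s
  proof (rule ccontr)
    assume "\<not> W s < x"
    then have "s \<in> C" using that \<open>c \<le> u\<close> assms by (auto simp: C_def)
    then show False using that bdd unfolding c_def by (meson cInf_lower not_le)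
  qed
  have "x \<le> W c"
  proof (rule ccontr)
    assume "\<not> x \<le> W c"
    moreover have "(W \<longlongrightarrow> W c) (at_right c)"
      using right_cont \<open>a \<le> c\<close> \<open>c \<le> u\<close> assms by simp
    ultimately have "\<forall>\<^sub>F y in at_right c. W y < x"
      by (simp add: order_tendstoD(2))
    then obtain b' where "b' > c" and b': "\<And>y. c < y \<Longrightarrow> y < b' \<Longrightarrow> W y < x"
      by (auto simp: eventually_at_right_field)
    obtain y where "y \<in> C" "y < b'"
      using cInf_less_iff[OF _ bdd] \<open>u \<in> C\<close> \<open>b' > c\<close> unfolding c_def by blast
    moreover have "c \<le> y" using \<open>y \<in> C\<close> bdd unfolding c_def by (rule cInf_lower)
    ultimately show False using b'[of y] \<open>\<not> x \<le> W c\<close> by (cases "y = c") (auto simp: C_def)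
  qed
  then have "a < c" using \<open>W a < x\<close> \<open>a \<le> c\<close> by (cases "a = c") auto
  have "LW c \<le> x"
  proof (rule tendsto_upperbound[OF left_limits])
    show "\<forall>\<^sub>F s in at_left c. W s \<le> x"
      unfolding eventually_at_left_field using \<open>a < c\<close> below by (auto intro: less_imp_le)
  qed (use \<open>a < c\<close> \<open>c \<le> u\<close> assms in auto)
  moreover have "c \<le> b" using \<open>c \<le> u\<close> \<open>u \<le> b\<close> by simp
  ultimately show False using no_upcrossing[of c] \<open>x \<le> W c\<close> \<open>a < c\<close> by simp
qed

lemma cadlag_stays_above:
  fixes W LW :: "real \<Rightarrow> real"
  assumes "\<And>s. a \<le> s \<Longrightarrow> s \<le> b \<Longrightarrow> (W \<longlongrightarrow> W s) (at_right s)"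
    and "\<And>s. a < s \<Longrightarrow> s \<le> b \<Longrightarrow> (W \<longlongrightarrow> LW s) (at_left s)"
    and "\<And>s. a < s \<Longrightarrow> s \<le> b \<Longrightarrow> x \<le> LW s \<Longrightarrow> x < W s"
    and "x < W a" "a \<le> u" "u \<le> b"
  shows "x < W u"
proof -
  have "- W u < - x"
    by (rule cadlag_stays_below[where W = "\<lambda>s. - W s" and LW = "\<lambda>s. - LW s" and a = a and b = b])
      (use assms in \<open>auto intro: tendsto_minus\<close>)
  then show ?thesis by simp
qed

lemma sgn_of_limit:
  fixes f :: "'a \<Rightarrow> real"
  assumes "(f \<longlongrightarrow> L) F" "F \<noteq> bot" "\<forall>\<^sub>F u in F. sgn (f u - x) = \<sigma>" "L \<noteq> x"
  shows "sgn (L - x) = \<sigma>"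
proof -
  have "((\<lambda>u. sgn (f u - x)) \<longlongrightarrow> sgn (L - x)) F"
    using assms by (intro tendsto_intros) auto
  moreover have "((\<lambda>u. sgn (f u - x)) \<longlongrightarrow> \<sigma>) F"
    using assms(3) by (rule tendsto_eventually)
  ultimately show ?thesis using tendsto_unique[OF assms(2)] by blast
qed

lemma indicator_atLeast_eq_sgn:
  fixes x y :: real
  assumes "y \<noteq> x"
  shows "indicator {x..} y = (of_bool (sgn (y - x) = 1) :: real)"
  using assms by (auto simp: indicator_def sgn_if)

lemma increases_through_iff_sides:
  fixes V :: "real \<Rightarrow> real"
  assumes "0 \<le> p" "p < m" "m < b" "V m = x" "continuous (at m within {0..}) V"
    and left: "\<And>u. p < u \<Longrightarrow> u < m \<Longrightarrow> sgn (V u - x) = l"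
    and right: "\<And>u. m < u \<Longrightarrow> u < b \<Longrightarrow> sgn (V u - x) = r"
  shows "increases_through V x m \<longleftrightarrow> l = -1 \<and> r = 1"
proof
  assume "increases_through V x m"
  then obtain \<delta> where "\<delta> > 0"
    and \<delta>: "\<And>s. 0 \<le> s \<Longrightarrow> 0 < \<bar>s - m\<bar> \<Longrightarrow> \<bar>s - m\<bar> < \<delta> \<Longrightarrow> sgn (V s - x) = sgn (s - m)"
    using \<open>V m = x\<close> unfolding increases_through_def by auto
  define h where "h = min \<delta> (min (m - p) (b - m)) / 2"
  have h: "0 < h" "h < \<delta>" "h < m - p" "h < b - m" using \<open>\<delta> > 0\<close> assms by (auto simp: h_def)
  have "l = sgn (V (m - h) - x)" using left[of "m - h"] h by simp
  also have "\<dots> = -1" using \<delta>[of "m - h"] h assms by simp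
  finally have "l = -1" .
  have "r = sgn (V (m + h) - x)" using right[of "m + h"] h by simp
  also have "\<dots> = 1" using \<delta>[of "m + h"] h assms by simp
  finally show "l = -1 \<and> r = 1" using \<open>l = -1\<close> by simp
next
  assume "l = -1 \<and> r = 1"
  then have "sgn (V s - V m) = sgn (s - m)" if "0 < \<bar>s - m\<bar>" "\<bar>s - m\<bar> < min (m - p) (b - m)" for s
    using left[of s] right[of s] that \<open>V m = x\<close> by (cases "s < m") (auto simp: sgn_if split: if_splits)
  then show "increases_through V x m"
    using assms unfolding increases_through_def by (intro conjI exI[of _ "min (m - p) (b - m)"]) auto
qed

lemma decreases_through_iff_sides:
  fixes V :: "real \<Rightarrow> real"
  assumes "0 \<le> p" "p < m" "m < b" "V m = x" "continuous (at m within {0..}) V"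
    and "\<And>u. p < u \<Longrightarrow> u < m \<Longrightarrow> sgn (V u - x) = l"
    and "\<And>u. m < u \<Longrightarrow> u < b \<Longrightarrow> sgn (V u - x) = r"
  shows "decreases_through V x m \<longleftrightarrow> l = 1 \<and> r = -1"
proof -
  have "sgn (- V u - - x) = - sgn (V u - x)" for u by (simp add: sgn_minus[symmetric])
  then have "decreases_through V x m \<longleftrightarrow> - l = -1 \<and> - r = 1"
    unfolding decreases_through_def
    using assms by (intro increases_through_iff_sides) (auto intro: continuous_minus)
  then show ?thesis by auto
qed

definition crossing_times :: "(real \<Rightarrow> real) \<Rightarrow> real \<Rightarrow> real set" where
  "crossing_times V x =
     {t. t > 0 \<and> ((left_lim V t < x \<and> x < V t) \<or> (V t < x \<and> x < left_lim V t) \<or> V t = x)}"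

definition crossing_contribution :: "(real \<Rightarrow> real) \<Rightarrow> real \<Rightarrow> real \<Rightarrow> real" where
  "crossing_contribution V x m =
     indicator {x..} (V m) - indicator {x..} (left_lim V m)
     + of_bool (m \<in> incr_set V x) - of_bool (m \<in> decr_set V x)"

lemma incr_set_subset_crossing_times: "{0<..t} \<inter> incr_set V x \<subseteq> crossing_times V x \<inter> {0<..t}"
  by (auto simp: crossing_times_def incr_set_def increases_through_def)

lemma decr_set_subset_crossing_times: "{0<..t} \<inter> decr_set V x \<subseteq> crossing_times V x \<inter> {0<..t}"
  by (auto simp: crossing_times_def decr_set_def decreases_through_def increases_through_def)

lemma tendsto_left_lim:
  assumes "(V \<longlongrightarrow> L) (at_left t)"
  shows "(V \<longlongrightarrow> left_lim V t) (at_left t)"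
proof -
  have "left_lim V t = L" unfolding left_lim_def using assms by (intro tendsto_Lim) auto
  then show ?thesis using assms by simp
qed

lemma finite_gap_below:
  fixes F :: "real set"
  assumes "finite F" "a < m"
  obtains c where "a < c" "c < m" "\<And>s. s \<in> F \<Longrightarrow> s < m \<Longrightarrow> s < c"
proof -
  define M where "M = Max (insert a {s \<in> F. s < m})"
  have "M < m" "a \<le> M" and le_M: "\<And>s. s \<in> F \<Longrightarrow> s < m \<Longrightarrow> s \<le> M"
    using assms by (auto simp: M_def)
  then have "s < (M + m) / 2" if "s \<in> F" "s < m" for s
    using le_M[OF that] by simp
  then show ?thesis using \<open>M < m\<close> \<open>a \<le> M\<close> by (intro that[of "(M + m) / 2"]) auto
qed

locale simple_level_path =
  fixes V :: "real \<Rightarrow> real" and x :: real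
  assumes cadlag: "cadlag_on_nonneg V" and simple: "simple_level V x" and start: "V 0 \<noteq> x"
begin

lemma tendsto_at_right: "0 \<le> s \<Longrightarrow> (V \<longlongrightarrow> V s) (at_right s)"
  using cadlag by (simp add: cadlag_on_nonneg_def)

lemma tendsto_left_lim_at_left: "0 < s \<Longrightarrow> (V \<longlongrightarrow> left_lim V s) (at_left s)"
  using cadlag by (auto simp: cadlag_on_nonneg_def intro: tendsto_left_lim)

lemma left_lim_eq_at_level: "0 < s \<Longrightarrow> V s = x \<or> left_lim V s = x \<Longrightarrow> left_lim V s = V s"
  using simple by (force simp: simple_level_def)

lemma discrete_crossing_times: "discrete (crossing_times V x)"
  using simple by (simp add: simple_level_def crossing_times_def)

lemma sides_of_non_crossing_time:
  assumes "0 < s" "s \<notin> crossing_times V x"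
  shows "(V s < x \<and> left_lim V s < x) \<or> (x < V s \<and> x < left_lim V s)"
proof -
  have "V s \<noteq> x" using assms by (auto simp: crossing_times_def)
  then have "left_lim V s \<noteq> x" using left_lim_eq_at_level[OF assms(1)] by auto
  with \<open>V s \<noteq> x\<close> show ?thesis using assms by (auto simp: crossing_times_def)
qed

lemma sgn_constant_without_crossings:
  assumes "0 \<le> a" "a \<le> u" "u \<le> b" "crossing_times V x \<inter> {a<..b} = {}" "V a \<noteq> x"
  shows "sgn (V u - x) = sgn (V a - x)"
proof -
  have sides: "(V s < x \<and> left_lim V s < x) \<or> (x < V s \<and> x < left_lim V s)" if "a < s" "s \<le> b" for s
  proof (rule sides_of_non_crossing_time)
    show "s \<notin> crossing_times V x" using assms(4) that by auto
  qed (use assms that in auto)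
  have "V u < x" if "V a < x"
    by (rule cadlag_stays_below[of a b V "left_lim V"])
      (use assms that in \<open>auto intro: tendsto_at_right tendsto_left_lim_at_left dest: sides\<close>)
  moreover have "x < V u" if "x < V a"
    by (rule cadlag_stays_above[of a b V "left_lim V"])
      (use assms that in \<open>auto intro: tendsto_at_right tendsto_left_lim_at_left dest: sides\<close>)
  ultimately show ?thesis using \<open>V a \<noteq> x\<close> by (cases "V a < x") auto
qed

lemma no_crossing_times_near_value:
  assumes "0 \<le> b1" "2 * d \<le> \<bar>c - x\<bar>" and near: "\<And>w. b1 < w \<Longrightarrow> w < b2 \<Longrightarrow> \<bar>V w - c\<bar> < d"
  shows "crossing_times V x \<inter> {b1<..<b2} = {}"
proof -
  have "y \<notin> crossing_times V x" if "b1 < y" "y < b2" for y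
  proof -
    have "\<bar>left_lim V y - c\<bar> \<le> d"
    proof (rule tendsto_upperbound)
      show "((\<lambda>w. \<bar>V w - c\<bar>) \<longlongrightarrow> \<bar>left_lim V y - c\<bar>) (at_left y)"
        using that assms by (intro tendsto_intros tendsto_left_lim_at_left) auto
      show "\<forall>\<^sub>F w in at_left y. \<bar>V w - c\<bar> \<le> d"
        unfolding eventually_at_left_field using that near by (intro exI[of _ b1]) (auto intro: less_imp_le)
    qed simp
    then show ?thesis
      using near[OF that] assms by (auto simp: crossing_times_def abs_if split: if_splits)
  qed
  then show ?thesis by auto
qed

lemma not_islimpt_crossing_times:
  assumes "0 \<le> z"
  shows "\<not> z islimpt crossing_times V x"
proof (cases "z \<in> crossing_times V x")
  case True
  then show ?thesis
    using discrete_crossing_times by (auto simp: discrete_def isolated_in_altdef islimpt_iff_eventually)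
next
  case False
  have "V z \<noteq> x" using False start sides_of_non_crossing_time[of z] assms by (cases "z = 0") auto
  have right: "\<forall>\<^sub>F y in at_right z. y \<notin> crossing_times V x"
  proof -
    define d where "d = \<bar>V z - x\<bar> / 2"
    have "\<forall>\<^sub>F y in at_right z. dist (V y) (V z) < d"
      using tendsto_at_right[OF assms] \<open>V z \<noteq> x\<close> by (intro tendstoD) (auto simp: d_def)
    then obtain b where "z < b" and near: "\<And>y. z < y \<Longrightarrow> y < b \<Longrightarrow> \<bar>V y - V z\<bar> < d"
      unfolding eventually_at_right_field dist_real_def by blast
    have "2 * d \<le> \<bar>V z - x\<bar>" by (simp add: d_def)
    then have "crossing_times V x \<inter> {z<..<b} = {}"
      by (rule no_crossing_times_near_value[OF assms _ near])
    then show ?thesis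
      unfolding eventually_at_right_field using \<open>z < b\<close> by (intro exI[of _ b]) auto
  qed
  have left: "\<forall>\<^sub>F y in at_left z. y \<notin> crossing_times V x"
  proof (cases "z = 0")
    case True
    then show ?thesis
      unfolding eventually_at_left_field by (intro exI[of _ "-1"]) (auto simp: crossing_times_def)
  next
    case False
    with assms have "0 < z" by simp
    define d where "d = \<bar>left_lim V z - x\<bar> / 2"
    have "left_lim V z \<noteq> x" using sides_of_non_crossing_time[OF \<open>0 < z\<close>] \<open>z \<notin> _\<close> by auto
    then have "\<forall>\<^sub>F y in at_left z. dist (V y) (left_lim V z) < d"
      using tendsto_left_lim_at_left[OF \<open>0 < z\<close>] by (intro tendstoD) (auto simp: d_def)
    then obtain b where "b < z" and near: "\<And>y. b < y \<Longrightarrow> y < z \<Longrightarrow> \<bar>V y - left_lim V z\<bar> < d"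
      unfolding eventually_at_left_field dist_real_def by blast
    have "2 * d \<le> \<bar>left_lim V z - x\<bar>" by (simp add: d_def)
    then have "crossing_times V x \<inter> {max 0 b<..<z} = {}"
      by (rule no_crossing_times_near_value[OF max.cobounded1]) (use near in auto)
    then show ?thesis
      unfolding eventually_at_left_field using \<open>b < z\<close> \<open>0 < z\<close> by (intro exI[of _ "max 0 b"]) auto
  qed
  from left right show ?thesis by (simp add: islimpt_iff_eventually eventually_at_split)
qed

lemma finite_crossing_times: "finite (crossing_times V x \<inter> {0..T})"
  using finite_not_islimpt_in_compact[of "{0..T}" "crossing_times V x"] not_islimpt_crossing_times
  by (auto simp: Int_commute)

lemma indicator_change_single_crossing:
  assumes "0 \<le> p" "p < m" "m \<le> b" and only_m: "crossing_times V x \<inter> {p<..b} = {m}"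
    and "V p \<noteq> x" "V b \<noteq> x"
  shows "indicator {x..} (V b) - indicator {x..} (V p) = crossing_contribution V x m"
proof -
  define l r where "l = sgn (V p - x)" and "r = sgn (V b - x)"
  have "0 < m" using assms by simp
  have only: "s = m" if "s \<in> crossing_times V x" "p < s" "s \<le> b" for s
    using only_m that by (metis IntI greaterThanAtMost_iff singletonD)
  have left: "sgn (V u - x) = l" if "p \<le> u" "u < m" for u
  proof (unfold l_def, rule sgn_constant_without_crossings)
    show "crossing_times V x \<inter> {p<..u} = {}" using only that assms by fastforce
  qed (use that assms in auto)
  have right: "sgn (V u - x) = r" if "m < u" "u \<le> b" for u
  proof -
    have "u \<notin> crossing_times V x" using only that assms by fastforce
    then have "V u \<noteq> x" using that \<open>0 < m\<close> by (auto simp: crossing_times_def)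
    moreover have "crossing_times V x \<inter> {u<..b} = {}" using only that assms by fastforce
    ultimately show ?thesis
      unfolding r_def using that \<open>0 < m\<close> by (intro sgn_constant_without_crossings[symmetric]) auto
  qed
  have ind_p: "indicator {x..} (V p) = (of_bool (l = 1) :: real)"
    and ind_b: "indicator {x..} (V b) = (of_bool (r = 1) :: real)"
    using assms by (simp_all add: indicator_atLeast_eq_sgn l_def r_def)
  have l_cases: "l = -1 \<or> l = 1" and r_cases: "r = -1 \<or> r = 1"
    using assms by (auto simp: l_def r_def sgn_if)
  show ?thesis
  proof (cases "V m = x")
    case True
    then have "m < b" using assms by (cases "m = b") auto
    have "left_lim V m = x" using left_lim_eq_at_level \<open>0 < m\<close> True by auto
    then have "(V \<longlongrightarrow> V m) (at_left m)" using tendsto_left_lim_at_left[OF \<open>0 < m\<close>] True by simp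
    then have "continuous (at m) V"
      unfolding continuous_at using \<open>0 < m\<close> by (intro filterlim_split_at tendsto_at_right) simp_all
    then have "continuous (at m within {0..}) V"
      by (rule continuous_at_imp_continuous_within)
    note sides = assms(1,2) \<open>m < b\<close> True this
    have "increases_through V x m \<longleftrightarrow> l = -1 \<and> r = 1"
      by (rule increases_through_iff_sides[OF sides]) (simp_all add: left right)
    moreover have "decreases_through V x m \<longleftrightarrow> l = 1 \<and> r = -1"
      by (rule decreases_through_iff_sides[OF sides]) (simp_all add: left right)
    ultimately show ?thesis
      using \<open>left_lim V m = x\<close> True ind_p ind_b l_cases r_cases
      by (auto simp: crossing_contribution_def incr_set_def decr_set_def)
  next
    case False
    have "m \<in> crossing_times V x" using only_m by auto
    then have "left_lim V m \<noteq> x" using False by (auto simp: crossing_times_def)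
    have "sgn (left_lim V m - x) = l"
    proof (rule sgn_of_limit[OF tendsto_left_lim_at_left[OF \<open>0 < m\<close>]])
      show "\<forall>\<^sub>F u in at_left m. sgn (V u - x) = l"
        unfolding eventually_at_left_field using \<open>p < m\<close> left by (intro exI[of _ p]) auto
    qed (use \<open>left_lim V m \<noteq> x\<close> in auto)
    moreover have "sgn (V m - x) = r"
    proof (cases "m = b")
      case False
      show ?thesis
      proof (rule sgn_of_limit[OF tendsto_at_right])
        show "\<forall>\<^sub>F u in at_right m. sgn (V u - x) = r"
          unfolding eventually_at_right_field using False \<open>m \<le> b\<close> right by (intro exI[of _ b]) auto
      qed (use \<open>0 < m\<close> \<open>V m \<noteq> x\<close> in auto)
    qed (simp add: r_def)
    ultimately show ?thesis
      using False \<open>left_lim V m \<noteq> x\<close> ind_p ind_b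
      by (simp add: crossing_contribution_def incr_set_def decr_set_def indicator_atLeast_eq_sgn
          increases_through_def decreases_through_def)
  qed
qed

lemma indicator_change_eq_sum_crossings:
  assumes "0 \<le> a" "a \<le> b" "V a \<noteq> x" "V b \<noteq> x"
  shows "indicator {x..} (V b) - indicator {x..} (V a) =
    (\<Sum>m \<in> crossing_times V x \<inter> {a<..b}. crossing_contribution V x m)"
  using assms
proof (induction "card (crossing_times V x \<inter> {a<..b})" arbitrary: b)
  case 0
  have "finite (crossing_times V x \<inter> {a<..b})"
    using finite_crossing_times[of b] by (rule finite_subset[rotated]) (use assms(1) in auto)
  then have "crossing_times V x \<inter> {a<..b} = {}" using 0 by simp
  then have "sgn (V b - x) = sgn (V a - x)"
    using 0 by (intro sgn_constant_without_crossings) auto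
  then show ?case
    using 0 \<open>crossing_times V x \<inter> {a<..b} = {}\<close> by (simp add: indicator_atLeast_eq_sgn)
next
  case (Suc n)
  define A where "A = crossing_times V x \<inter> {a<..b}"
  have "finite A"
    using finite_crossing_times[of b] unfolding A_def by (rule finite_subset[rotated]) (use assms(1) in auto)
  moreover have "A \<noteq> {}" using Suc.hyps(2) unfolding A_def by auto
  ultimately have "Max A \<in> A" and le_Max: "\<And>s. s \<in> A \<Longrightarrow> s \<le> Max A" by auto
  define m where "m = Max A"
  have "a < m" "m \<le> b" using \<open>Max A \<in> A\<close> by (auto simp: A_def m_def)
  obtain c where "a < c" "c < m" and below_c: "\<And>s. s \<in> A \<Longrightarrow> s < m \<Longrightarrow> s < c"
    using finite_gap_below[OF \<open>finite A\<close> \<open>a < m\<close>] by blast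
  have before: "crossing_times V x \<inter> {a<..c} = A - {m}"
    using le_Max below_c \<open>c < m\<close> \<open>m \<le> b\<close> unfolding m_def by (force simp: A_def)
  have after: "crossing_times V x \<inter> {c<..b} = {m}"
    using le_Max below_c \<open>c < m\<close> \<open>a < c\<close> \<open>Max A \<in> A\<close> unfolding m_def by (force simp: A_def)
  have "V c \<noteq> x"
  proof
    assume "V c = x"
    then have "c \<in> A" using \<open>a < c\<close> \<open>c < m\<close> \<open>m \<le> b\<close> Suc.prems(1)
      by (simp add: A_def crossing_times_def)
    then show False using below_c \<open>c < m\<close> by blast
  qed
  have "n = card (crossing_times V x \<inter> {a<..c})"
    using Suc.hyps(2) \<open>finite A\<close> \<open>Max A \<in> A\<close> unfolding before m_def A_def by simp
  then have "indicator {x..} (V c) - indicator {x..} (V a) = (\<Sum>s \<in> A - {m}. crossing_contribution V x s)"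
    using Suc.hyps(1)[of c] Suc.prems \<open>a < c\<close> \<open>V c \<noteq> x\<close> unfolding before by simp
  moreover have "indicator {x..} (V b) - indicator {x..} (V c) = crossing_contribution V x m"
    using Suc.prems \<open>a < c\<close> \<open>c < m\<close> \<open>m \<le> b\<close> after \<open>V c \<noteq> x\<close>
    by (intro indicator_change_single_crossing) auto
  moreover have "(\<Sum>s \<in> A. crossing_contribution V x s) = crossing_contribution V x m + (\<Sum>s \<in> A - {m}. crossing_contribution V x s)"
    using \<open>finite A\<close> \<open>Max A \<in> A\<close> unfolding m_def by (rule sum.remove)
  ultimately show ?case unfolding A_def by simp
qed

lemma jump_times_subset_crossing_times:
  "{s \<in> {0<..t}. indicator {x..} (V s) - indicator {x..} (left_lim V s) \<noteq> (0::real)}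
     \<subseteq> crossing_times V x \<inter> {0<..t}"
proof
  fix s assume "s \<in> {s \<in> {0<..t}. indicator {x..} (V s) - indicator {x..} (left_lim V s) \<noteq> (0::real)}"
  then have "0 < s" "s \<le> t" and jump: "indicator {x..} (V s) \<noteq> (indicator {x..} (left_lim V s) :: real)"
    by auto
  show "s \<in> crossing_times V x \<inter> {0<..t}"
  proof (rule ccontr)
    assume "s \<notin> crossing_times V x \<inter> {0<..t}"
    then have "s \<notin> crossing_times V x" using \<open>0 < s\<close> \<open>s \<le> t\<close> by simp
    then show False using sides_of_non_crossing_time[OF \<open>0 < s\<close>] jump by (auto simp: indicator_def)
  qed
qed

lemma sum_crossing_contribution:
  "(\<Sum>m \<in> crossing_times V x \<inter> {0<..t}. crossing_contribution V x m) =
     (\<Sum>s \<in> {s \<in> {0<..t}. indicator {x..} (V s) - indicator {x..} (left_lim V s) \<noteq> (0::real)}.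
        indicator {x..} (V s) - indicator {x..} (left_lim V s))
     + real_of_int (level_count V x t)"
  (is "(\<Sum>m\<in>?C. _) = (\<Sum>s\<in>?J. ?jump s) + _")
proof -
  have "finite ?C"
    using finite_crossing_times[of t] by (rule finite_subset[rotated]) auto
  have "(\<Sum>m\<in>?C. crossing_contribution V x m) =
      (\<Sum>m\<in>?C. ?jump m) + (\<Sum>m\<in>?C. of_bool (m \<in> incr_set V x)) - (\<Sum>m\<in>?C. of_bool (m \<in> decr_set V x))"
    by (simp add: crossing_contribution_def sum.distrib sum_subtractf)
  also have "(\<Sum>m\<in>?C. ?jump m) = (\<Sum>s\<in>?J. ?jump s)"
    using \<open>finite ?C\<close> jump_times_subset_crossing_times by (rule sum.mono_neutral_right) auto
  also have "(\<Sum>m\<in>?C. of_bool (m \<in> incr_set V x)) = real (card ({0<..t} \<inter> incr_set V x))"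
  proof -
    have "?C \<inter> {m. m \<in> incr_set V x} = {0<..t} \<inter> incr_set V x"
      using incr_set_subset_crossing_times[of t V x] by blast
    then show ?thesis using \<open>finite ?C\<close> by simp
  qed
  also have "(\<Sum>m\<in>?C. of_bool (m \<in> decr_set V x)) = real (card ({0<..t} \<inter> decr_set V x))"
  proof -
    have "?C \<inter> {m. m \<in> decr_set V x} = {0<..t} \<inter> decr_set V x"
      using decr_set_subset_crossing_times[of t V x] by blast
    then show ?thesis using \<open>finite ?C\<close> by simp
  qed
  finally show ?thesis by (simp add: level_count_def)
qed

end

theorem mainTheorem5:
  fixes V :: "real \<Rightarrow> real" and t x :: real
  assumes "cadlag_on_nonneg V"
    and "finite_variation_compacts V"
    and "t > 0"
    and "simple_level V x"
    and "x \<noteq> V 0" and "x \<noteq> V t"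
  shows "finite ({0<..t} \<inter> incr_set V x) \<and>
         finite ({0<..t} \<inter> decr_set V x) \<and>
         finite {s \<in> {0<..t}. indicator {x..} (V s) - indicator {x..} (left_lim V s) \<noteq> (0::real)} \<and>
         (indicator {x..} (V t) :: real) =
           indicator {x..} (V 0) + real_of_int (level_count V x t)
           + (\<Sum>s \<in> {s \<in> {0<..t}. indicator {x..} (V s) - indicator {x..} (left_lim V s) \<noteq> (0::real)}.
                indicator {x..} (V s) - indicator {x..} (left_lim V s))"
proof -
  interpret simple_level_path V x
    using assms by unfold_locales auto
  have fin: "finite (crossing_times V x \<inter> {0<..t})"
    using finite_crossing_times[of t] by (rule finite_subset[rotated]) auto
  have "indicator {x..} (V t) - indicator {x..} (V 0) =
      (\<Sum>m \<in> crossing_times V x \<inter> {0<..t}. crossing_contribution V x m)"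
    using assms(3,5,6) by (intro indicator_change_eq_sum_crossings) auto
  then show ?thesis
    unfolding sum_crossing_contribution
    by (intro conjI finite_subset[OF incr_set_subset_crossing_times fin]
        finite_subset[OF decr_set_subset_crossing_times fin]
        finite_subset[OF jump_times_subset_crossing_times fin]) linarith
qed

end
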